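(* Let $g:\mathbb{R}^n\to\mathbb{R}\cup\{+\infty\}$ be a proper closed convex function and let $f=f_1-f_2$, where $f_1,f_2:\mathbb{R}^n\to\mathbb{R}$ are convex differentiable functions such that $\nabla f_1$ is Lipschitz continuous with modulus $L>0$, $\nabla f_2$ is Lipschitz continuous with modulus $l\ge 0$, and $L\ge l$. Let $F=f+g$, and assume $\inf F>-\infty$ and that this infimum is attained. Let $\mathcal X=\{x:0\in\nabla f(x)+\partial g(x)\}$ be the set of stationary points, and suppose: (a) (error bound) for any $\xi\ge\inf F$ there exist $\epsilon>0$ and $\tau>0$ such that $\operatorname{dist}(x,\mathcal X)\le\tau\|\mathrm{Prox}_{\frac1L g}(x-\tfrac1L\nabla f(x))-x\|$ whenever $\|\mathrm{Prox}_{\frac1L g}(x-\tfrac1L\nabla f(x))-x\|<\epsilon$ and $F(x)\le\xi$; (b) there exists $\delta>0$ such that $\|x-y\|\ge\delta$ whenever $x,y\in\mathcal X$ and $F(x)\ne F(y)$. Let $\{x^k\}$ be generated by Algorithm 1 (described in the context) with $\bar\beta:=\sup_k\beta_k<\sqrt{L/(L+l)}$, and let $\alpha\in\big(\tfrac{L+l}{2}\bar\beta^2,\tfrac L2\big)$. Then: (i) $\lim_{k\to\infty}\operatorname{dist}(x^k,\mathcal X)=0$; (ii) the sequence $\{H_{k,\alpha}\}$ is $Q$-linearly convergent.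
   Context: $\partial g$ denotes the convex subdifferential; $\operatorname{dist}(x,\mathcal X)=\inf_{y\in\mathcal X}\|x-y\|$. For a proper closed convex $h$, $\mathrm{Prox}_h(v)=\arg\min_{x\in\mathbb{R}^n}\{h(x)+\tfrac12\|x-v\|^2\}$. Algorithm 1 (proximal gradient algorithm with extrapolation): choose $x^0\in\operatorname{dom} g$ and $\{\beta_k\}\subseteq[0,\sqrt{L/(L+l)}]$, set $x^{-1}=x^0$, and for $k=0,1,2,\dots$ set $y^k=x^k+\beta_k(x^k-x^{k-1})$ and $x^{k+1}=\mathrm{Prox}_{\frac1L g}\big(y^k-\tfrac1L\nabla f(y^k)\big)$. For $\alpha\ge0$, $H_{k,\alpha}:=F(x^k)+\alpha\|x^k-x^{k-1}\|^2$. A real sequence $\{a_k\}$ converges $Q$-linearly to $a^*$ if there exist $c\in(0,1)$ and $k_0$ such that $|a_{k+1}-a^*|\le c|a_k-a^*|$ for all $k\ge k_0$. *)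

theory Defs
  imports "HOL-Analysis.Analysis"
begin

definition eff_dom :: "('a \<Rightarrow> ereal) \<Rightarrow> 'a set" where
  "eff_dom g = {x. g x < \<infinity>}"

definition proper_fun :: "('a \<Rightarrow> ereal) \<Rightarrow> bool" where
  "proper_fun g \<longleftrightarrow> (\<forall>x. g x \<noteq> -\<infinity>) \<and> (\<exists>x. g x \<noteq> \<infinity>)"

definition epigraph_e :: "('a \<Rightarrow> ereal) \<Rightarrow> ('a \<times> real) set" where
  "epigraph_e g = {(x, r). g x \<le> ereal r}"

definition convex_fun :: "('a::real_vector \<Rightarrow> ereal) \<Rightarrow> bool" where
  "convex_fun g \<longleftrightarrow> convex (epigraph_e g)"

definition closed_fun :: "('a::topological_space \<Rightarrow> ereal) \<Rightarrow> bool" where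
  "closed_fun g \<longleftrightarrow> closed (epigraph_e g)"

definition subdiff :: "('a::real_inner \<Rightarrow> ereal) \<Rightarrow> 'a \<Rightarrow> 'a set" where
  "subdiff g x = {v. g x < \<infinity> \<and> (\<forall>y. g x + ereal (inner v (y - x)) \<le> g y)}"

definition prox :: "('a::real_normed_vector \<Rightarrow> ereal) \<Rightarrow> 'a \<Rightarrow> 'a" where
  "prox h v = (THE x. \<forall>y. h x + ereal ((norm (x - v))\<^sup>2 / 2) \<le> h y + ereal ((norm (y - v))\<^sup>2 / 2))"

definition Q_linear_to :: "(nat \<Rightarrow> real) \<Rightarrow> real \<Rightarrow> bool" where
  "Q_linear_to a a' \<longleftrightarrow> (\<exists>c. 0 < c \<and> c < 1 \<and> (\<exists>k0. \<forall>k\<ge>k0. \<bar>a (Suc k) - a'\<bar> \<le> c * \<bar>a k - a'\<bar>))"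

definition Q_linear_convergent :: "(nat \<Rightarrow> real) \<Rightarrow> bool" where
  "Q_linear_convergent a \<longleftrightarrow> (\<exists>a'. Q_linear_to a a')"

end

theory Submission
  imports Defs
begin

text \<open>The three-point property of the proximal map, together with the quadratic upper bound for
  f1 and the lower bound for f2, shows that the merit function
  H k = F (x k) + \<alpha> * |x k - x (k - 1)|^2 decreases by at least
  \<mu> * |x k - x (k - 1)|^2 + \<nu> * |x (k + 1) - x k|^2 in each step, with \<mu>, \<nu> > 0 by the choice
  of \<alpha>. Since H is bounded below, the steps tend to 0, hence so does the prox-gradient residual,
  and the error bound gives dist (x k, X) \<rightarrow> 0. By the separation hypothesis the values of F at
  nearest stationary points are eventually a constant \<zeta>, which is the limit of H. Applying the
  step inequality with the nearest stationary point as comparison point, and the error bound once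
  more, bounds H (k + 1) - \<zeta> by a multiple of the squared step lengths, hence by a multiple of
  H k - H (k + 1); this is Q-linear convergence.\<close>

lemma has_field_derivative_along_line:
  fixes f :: "'a::real_inner \<Rightarrow> real"
  assumes "\<And>z. GDERIV f z :> df z"
  shows "((\<lambda>s. f (x + s *\<^sub>R d)) has_field_derivative inner d (df (x + s *\<^sub>R d))) (at s within A)"
proof -
  have line: "((\<lambda>s. x + s *\<^sub>R d) has_derivative (\<lambda>t. t *\<^sub>R d)) (at s within A)"
    by (auto intro!: derivative_eq_intros)
  have "(f has_derivative (\<lambda>h. inner h (df (x + s *\<^sub>R d)))) (at (x + s *\<^sub>R d))"
    using assms unfolding gderiv_def by blast
  from has_derivative_compose[OF line this] show ?thesis
    unfolding has_field_derivative_def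
    by (rule has_derivative_eq_rhs) (auto simp: fun_eq_iff inner_commute)
qed

lemma convex_on_gradient_inequality:
  fixes f :: "'a::real_inner \<Rightarrow> real"
  assumes cvx: "convex_on UNIV f" and grad: "\<And>z. GDERIV f z :> df z"
  shows "f x + inner (df x) (y - x) \<le> f y"
proof -
  define \<psi> where "\<psi> = (\<lambda>s. f (x + s *\<^sub>R (y - x)))"
  have "convex_on UNIV \<psi>"
  proof (rule convex_onI)
    fix t a b :: real assume t: "0 < t" "t < 1"
    have "x + ((1 - t) *\<^sub>R a + t *\<^sub>R b) *\<^sub>R (y - x)
        = (1 - t) *\<^sub>R (x + a *\<^sub>R (y - x)) + t *\<^sub>R (x + b *\<^sub>R (y - x))"
      by (simp add: algebra_simps)
    then show "\<psi> ((1 - t) *\<^sub>R a + t *\<^sub>R b) \<le> (1 - t) * \<psi> a + t * \<psi> b"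
      unfolding \<psi>_def using convex_onD[OF cvx, of t] t by auto
  qed auto
  then have "\<psi> 1 - \<psi> 0 \<ge> inner (y - x) (df (x + 0 *\<^sub>R (y - x))) * (1 - 0)"
    by (rule convex_on_imp_above_tangent)
      (use has_field_derivative_along_line[OF grad, of x "y - x" 0 UNIV] in \<open>auto simp: \<psi>_def\<close>)
  then show ?thesis by (simp add: \<psi>_def inner_commute)
qed

lemma lipschitz_gradient_upper_bound:
  fixes f :: "'a::real_inner \<Rightarrow> real"
  assumes grad: "\<And>z. GDERIV f z :> df z" and lip: "M-lipschitz_on UNIV df"
  shows "f y \<le> f x + inner (df x) (y - x) + M / 2 * (norm (y - x))\<^sup>2"
proof -
  define d where "d = y - x"
  define \<psi> where "\<psi> = (\<lambda>s. f (x + s *\<^sub>R d) - s * inner (df x) d - M / 2 * s\<^sup>2 * (norm d)\<^sup>2)"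
  have "DERIV \<psi> s :> inner d (df (x + s *\<^sub>R d)) - inner (df x) d - M * s * (norm d)\<^sup>2" for s
    unfolding \<psi>_def using has_field_derivative_along_line[OF grad, of x d s UNIV]
    by (auto intro!: derivative_eq_intros simp: power2_eq_square)
  then obtain z where z: "0 < z" "z < 1"
    and mvt: "\<psi> 1 - \<psi> 0 = inner d (df (x + z *\<^sub>R d)) - inner (df x) d - M * z * (norm d)\<^sup>2"
    using MVT2[of 0 1 \<psi>] by force
  have "inner d (df (x + z *\<^sub>R d)) - inner (df x) d = inner d (df (x + z *\<^sub>R d) - df x)"
    by (simp add: inner_diff_right inner_commute)
  also have "\<dots> \<le> norm d * norm (df (x + z *\<^sub>R d) - df x)"
    by (rule Cauchy_Schwarz_ineq2[THEN order_trans[OF abs_ge_self]])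
  also have "\<dots> \<le> norm d * (M * norm (z *\<^sub>R d))"
    using lipschitz_on_normD[OF lip, of "x + z *\<^sub>R d" x] by (intro mult_left_mono) auto
  also have "\<dots> = M * z * (norm d)\<^sup>2"
    using z by (simp add: power2_eq_square)
  finally have "\<psi> 1 \<le> \<psi> 0" using mvt by simp
  then show ?thesis by (simp add: \<psi>_def d_def)
qed

lemma norm_convex_combination_minus_squared:
  fixes a b v :: "'a::real_inner"
  shows "(norm ((1 - s) *\<^sub>R a + s *\<^sub>R b - v))\<^sup>2
     = (1 - s) * (norm (a - v))\<^sup>2 + s * (norm (b - v))\<^sup>2 - s * (1 - s) * (norm (a - b))\<^sup>2"
proof -
  have "(1 - s) *\<^sub>R a + s *\<^sub>R b - v = (1 - s) *\<^sub>R (a - v) + s *\<^sub>R (b - v)"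
    and "a - b = (a - v) - (b - v)"
    by (simp_all add: algebra_simps)
  then show ?thesis
    unfolding power2_norm_eq_inner
    by (simp add: inner_add_left inner_add_right inner_diff_left inner_diff_right
        inner_commute[of "b - v" "a - v"] power2_eq_square algebra_simps)
qed

lemma norm_minus_shift_squared:
  fixes u y d :: "'a::real_inner"
  shows "(norm (u - (y - t *\<^sub>R d)))\<^sup>2 = (norm (u - y))\<^sup>2 + 2 * t * inner d (u - y) + t\<^sup>2 * (norm d)\<^sup>2"
proof -
  have "u - (y - t *\<^sub>R d) = (u - y) + t *\<^sub>R d" by simp
  then show ?thesis
    unfolding power2_norm_eq_inner
    by (simp add: inner_add_left inner_add_right inner_commute algebra_simps power2_eq_square)
qed

lemma Cauchy_if_dist_squared_bounded:
  fixes u :: "nat \<Rightarrow> 'a::metric_space"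
  assumes e: "e \<longlonglongrightarrow> 0" and bound: "\<And>i j. (dist (u i) (u j))\<^sup>2 \<le> e i + e j"
  shows "Cauchy u"
proof (rule metric_CauchyI)
  fix r :: real assume r: "0 < r"
  have "\<forall>\<^sub>F n in sequentially. e n < r\<^sup>2 / 2"
    using e r by (intro order_tendstoD) auto
  then obtain M where M: "\<And>n. n \<ge> M \<Longrightarrow> e n < r\<^sup>2 / 2"
    unfolding eventually_sequentially by blast
  show "\<exists>M. \<forall>i\<ge>M. \<forall>j\<ge>M. dist (u i) (u j) < r"
  proof (intro exI allI impI)
    fix i j assume "M \<le> i" "M \<le> j"
    then have "(dist (u i) (u j))\<^sup>2 < r\<^sup>2"
      using bound[of i j] M[of i] M[of j] by linarith
    then show "dist (u i) (u j) < r"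
      using r by (simp add: power_less_imp_less_base)
  qed
qed

lemma Q_linear_toI:
  fixes a :: "nat \<Rightarrow> real"
  assumes c: "c > 0"
    and above: "\<And>k. k \<ge> k0 \<Longrightarrow> \<zeta> \<le> a k"
    and gap: "\<And>k. k \<ge> k0 \<Longrightarrow> a (Suc k) - \<zeta> \<le> c * (a k - a (Suc k))"
  shows "Q_linear_to a \<zeta>"
  unfolding Q_linear_to_def
proof (intro exI conjI allI impI)
  show "0 < c / (1 + c)" "c / (1 + c) < 1" using c by auto
  fix k assume k: "k0 \<le> k"
  have "(1 + c) * (a (Suc k) - \<zeta>) \<le> c * (a k - \<zeta>)"
    using gap[OF k] by (simp add: algebra_simps)
  then have "a (Suc k) - \<zeta> \<le> c / (1 + c) * (a k - \<zeta>)"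
    using c by (simp add: field_simps)
  then show "\<bar>a (Suc k) - \<zeta>\<bar> \<le> c / (1 + c) * \<bar>a k - \<zeta>\<bar>"
    using above[OF k] above[of "Suc k"] k by simp
qed

locale proper_closed_convex =
  fixes g :: "'a::euclidean_space \<Rightarrow> ereal"
  assumes g_proper: "proper_fun g" and g_closed: "closed_fun g" and g_convex: "convex_fun g"
begin

definition gval :: "'a \<Rightarrow> real" where "gval u = real_of_ereal (g u)"

lemma g_eq_gval: "g u < \<infinity> \<Longrightarrow> g u = ereal (gval u)"
  using g_proper unfolding proper_fun_def gval_def by (cases "g u") auto

lemma g_not_finite_eq: "\<not> g u < \<infinity> \<Longrightarrow> g u = \<infinity>"
  by (simp add: top.not_eq_extremum)

lemma dom_nonempty: "\<exists>u. g u < \<infinity>"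
  using g_proper unfolding proper_fun_def by (auto simp: less_top)

lemma g_convex_combination:
  assumes "g a < \<infinity>" "g b < \<infinity>" "0 \<le> s" "s \<le> 1"
  shows "g ((1 - s) *\<^sub>R a + s *\<^sub>R b) \<le> ereal ((1 - s) * gval a + s * gval b)"
proof -
  have "(a, gval a) \<in> epigraph_e g" "(b, gval b) \<in> epigraph_e g"
    using g_eq_gval assms by (auto simp: epigraph_e_def)
  then have "(1 - s) *\<^sub>R (a, gval a) + s *\<^sub>R (b, gval b) \<in> epigraph_e g"
    using g_convex assms unfolding convex_fun_def by (intro convexD_alt) auto
  then show ?thesis by (simp add: epigraph_e_def)
qed

lemma g_le_limit:
  assumes "u \<longlonglongrightarrow> p" "r \<longlonglongrightarrow> \<rho>" "\<And>n. g (u n) \<le> ereal (r n)"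
  shows "g p \<le> ereal \<rho>"
proof -
  have "(p, \<rho>) \<in> epigraph_e g"
    using g_closed unfolding closed_fun_def
    by (rule closed_sequentially) (use assms in \<open>auto simp: epigraph_e_def intro: tendsto_Pair\<close>)
  then show ?thesis by (simp add: epigraph_e_def)
qed

text \<open>Separate a point below the graph from the closed convex epigraph; the hyperplane cannot be
  vertical since it also separates that point from the graph point just above it.\<close>
lemma affine_minorant: "\<exists>a c. \<forall>u. ereal (inner a u + c) \<le> g u"
proof -
  obtain u0 where u0: "g u0 < \<infinity>" using dom_nonempty by blast
  have "(u0, gval u0 - 1) \<notin> epigraph_e g"
    using g_eq_gval[OF u0] by (auto simp: epigraph_e_def)
  then obtain A b where A: "inner A (u0, gval u0 - 1) < b" and epi: "\<forall>z\<in>epigraph_e g. inner A z > b"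
    using separating_hyperplane_closed_point g_closed g_convex
    unfolding closed_fun_def convex_fun_def by blast
  obtain a1 b1 where A_eq: "A = (a1, b1)" by (cases A)
  have "(u0, gval u0) \<in> epigraph_e g" using g_eq_gval[OF u0] by (auto simp: epigraph_e_def)
  then have b1: "b1 > 0"
    using A epi by (auto simp: A_eq inner_Pair algebra_simps)
  have "ereal (inner (- (1 / b1) *\<^sub>R a1) u + b / b1) \<le> g u" for u
  proof (cases "g u < \<infinity>")
    case True
    then have "(u, gval u) \<in> epigraph_e g" using g_eq_gval by (auto simp: epigraph_e_def)
    then have "inner a1 u + b1 * gval u > b" using epi by (auto simp: A_eq inner_Pair)
    then have "inner (- (1 / b1) *\<^sub>R a1) u + b / b1 \<le> gval u"
      using b1 by (simp add: field_simps)
    then show ?thesis using g_eq_gval[OF True] by simp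
  qed (simp add: g_not_finite_eq)
  then show ?thesis by blast
qed

definition prox_obj :: "real \<Rightarrow> 'a \<Rightarrow> 'a \<Rightarrow> real" where
  "prox_obj t v u = t * gval u + (norm (u - v))\<^sup>2 / 2"

lemma prox_obj_convex_combination:
  assumes "g a < \<infinity>" "g b < \<infinity>" "0 \<le> s" "s \<le> 1" "t > 0"
  shows "g ((1 - s) *\<^sub>R a + s *\<^sub>R b) < \<infinity>"
    and "prox_obj t v ((1 - s) *\<^sub>R a + s *\<^sub>R b)
           \<le> (1 - s) * prox_obj t v a + s * prox_obj t v b - s * (1 - s) / 2 * (norm (a - b))\<^sup>2"
proof -
  have G: "g ((1 - s) *\<^sub>R a + s *\<^sub>R b) \<le> ereal ((1 - s) * gval a + s * gval b)"
    by (rule g_convex_combination[OF assms(1-4)])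
  show fin: "g ((1 - s) *\<^sub>R a + s *\<^sub>R b) < \<infinity>"
    by (rule le_less_trans[OF G]) simp
  have "gval ((1 - s) *\<^sub>R a + s *\<^sub>R b) \<le> (1 - s) * gval a + s * gval b"
    using G g_eq_gval[OF fin] by simp
  then have "t * gval ((1 - s) *\<^sub>R a + s *\<^sub>R b) \<le> t * ((1 - s) * gval a + s * gval b)"
    using assms by (intro mult_left_mono) auto
  then show "prox_obj t v ((1 - s) *\<^sub>R a + s *\<^sub>R b)
      \<le> (1 - s) * prox_obj t v a + s * prox_obj t v b - s * (1 - s) / 2 * (norm (a - b))\<^sup>2"
    unfolding prox_obj_def norm_convex_combination_minus_squared by (simp add: field_simps)
qed

lemma prox_obj_midpoint:
  assumes "g a < \<infinity>" "g b < \<infinity>" "t > 0"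
  shows "g ((1/2) *\<^sub>R a + (1/2) *\<^sub>R b) < \<infinity>"
    and "prox_obj t v ((1/2) *\<^sub>R a + (1/2) *\<^sub>R b)
           \<le> (prox_obj t v a + prox_obj t v b) / 2 - (norm (a - b))\<^sup>2 / 8"
  using prox_obj_convex_combination(1)[OF assms(1,2), of "1/2" t]
    prox_obj_convex_combination(2)[OF assms(1,2), of "1/2" t v] assms
  by (auto simp: add_divide_distrib)

lemma prox_obj_bdd_below:
  assumes t: "t > 0"
  shows "\<exists>B. \<forall>u. g u < \<infinity> \<longrightarrow> B \<le> prox_obj t v u"
proof -
  obtain a c where ac: "\<And>u. ereal (inner a u + c) \<le> g u" using affine_minorant by blast
  have "t * (inner a v + c) - (t * norm a)\<^sup>2 / 2 \<le> prox_obj t v u" if u: "g u < \<infinity>" for u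
  proof -
    have "t * (inner a u + c) \<le> t * gval u"
      using ac[of u] g_eq_gval[OF u] t by simp
    moreover have "- (norm a * norm (u - v)) \<le> inner a (u - v)"
      using Cauchy_Schwarz_ineq2[of a "u - v"] by linarith
    then have "t * inner a (u - v) \<ge> - (t * (norm a * norm (u - v)))"
      using t by (metis minus_mult_right mult_left_mono less_imp_le)
    moreover have "t * (norm a * norm (u - v)) \<le> (t * norm a)\<^sup>2 / 2 + (norm (u - v))\<^sup>2 / 2"
      using sum_squares_bound[of "t * norm a" "norm (u - v)"]
      by (simp add: power2_eq_square algebra_simps)
    ultimately show ?thesis
      unfolding prox_obj_def by (simp add: inner_diff_right algebra_simps)
  qed
  then show ?thesis by blast
qed

text \<open>A minimising sequence is Cauchy by the midpoint inequality, and its limit is a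
  minimiser because g is closed.\<close>
lemma prox_obj_has_minimizer:
  assumes t: "t > 0"
  shows "\<exists>p. g p < \<infinity> \<and> (\<forall>u. g u < \<infinity> \<longrightarrow> prox_obj t v p \<le> prox_obj t v u)"
proof -
  define S where "S = prox_obj t v ` {u. g u < \<infinity>}"
  define m where "m = Inf S"
  have "S \<noteq> {}" using dom_nonempty by (auto simp: S_def)
  moreover have S_bdd: "bdd_below S"
    using prox_obj_bdd_below[OF t] by (auto simp: S_def bdd_below_def)
  ultimately have "\<exists>u. g u < \<infinity> \<and> prox_obj t v u < m + inverse (real (Suc n))" for n
    using cInf_less_iff[of S "m + inverse (real (Suc n))"] by (auto simp: S_def m_def)
  then obtain u where u_dom: "\<And>n. g (u n) < \<infinity>"
    and u_obj: "\<And>n. prox_obj t v (u n) < m + inverse (real (Suc n))"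
    by metis
  have m_le: "g w < \<infinity> \<Longrightarrow> m \<le> prox_obj t v w" for w
    unfolding m_def using S_bdd by (intro cInf_lower) (auto simp: S_def)
  have "Cauchy u"
  proof (rule Cauchy_if_dist_squared_bounded)
    show "(\<lambda>n. 4 * inverse (real (Suc n))) \<longlonglongrightarrow> 0"
      using tendsto_mult_right_zero[OF LIMSEQ_inverse_real_of_nat] by simp
    fix i j
    have "m \<le> prox_obj t v ((1/2) *\<^sub>R u i + (1/2) *\<^sub>R u j)"
      using m_le prox_obj_midpoint(1)[OF u_dom u_dom t] by blast
    then show "(dist (u i) (u j))\<^sup>2 \<le> 4 * inverse (real (Suc i)) + 4 * inverse (real (Suc j))"
      using prox_obj_midpoint(2)[OF u_dom[of i] u_dom[of j] t, of v] u_obj[of i] u_obj[of j]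
      unfolding dist_norm by argo
  qed
  then obtain p where p: "u \<longlonglongrightarrow> p" using Cauchy_convergent_iff convergent_def by blast
  have "(\<lambda>n. prox_obj t v (u n)) \<longlonglongrightarrow> m"
  proof (rule tendsto_sandwich[OF _ _ tendsto_const LIMSEQ_inverse_real_of_nat_add[of m]])
    show "\<forall>\<^sub>F n in sequentially. m \<le> prox_obj t v (u n)"
      using m_le u_dom by simp
    show "\<forall>\<^sub>F n in sequentially. prox_obj t v (u n) \<le> m + inverse (real (Suc n))"
      using u_obj by (intro always_eventually allI less_imp_le)
  qed
  then have "(\<lambda>n. (prox_obj t v (u n) - (norm (u n - v))\<^sup>2 / 2) / t) \<longlonglongrightarrow> (m - (norm (p - v))\<^sup>2 / 2) / t"
    using t by (auto intro!: tendsto_intros p)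
  then have g_p: "g p \<le> ereal ((m - (norm (p - v))\<^sup>2 / 2) / t)"
    by (rule g_le_limit[OF p]) (use g_eq_gval u_dom t in \<open>simp add: prox_obj_def\<close>)
  then have p_dom: "g p < \<infinity>" by (rule le_less_trans) simp
  have "prox_obj t v p \<le> m"
    using g_p g_eq_gval[OF p_dom] t by (simp add: prox_obj_def field_simps)
  then show ?thesis using p_dom m_le by force
qed

lemma prox_minimizes:
  assumes t: "t > 0"
  shows "g (prox (\<lambda>u. ereal t * g u) v) < \<infinity>"
    and "g u < \<infinity> \<Longrightarrow> prox_obj t v (prox (\<lambda>u. ereal t * g u) v) \<le> prox_obj t v u"
proof -
  obtain p where p_dom: "g p < \<infinity>" and p_min: "\<And>u. g u < \<infinity> \<Longrightarrow> prox_obj t v p \<le> prox_obj t v u"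
    using prox_obj_has_minimizer[OF t] by blast
  have obj_fin: "ereal t * g u + ereal ((norm (u - v))\<^sup>2 / 2) = ereal (prox_obj t v u)"
    if "g u < \<infinity>" for u
    using g_eq_gval[OF that] by (simp add: prox_obj_def)
  have obj_inf: "ereal t * g u + ereal ((norm (u - v))\<^sup>2 / 2) = \<infinity>" if "\<not> g u < \<infinity>" for u
    using g_not_finite_eq[OF that] t by simp
  have "prox (\<lambda>u. ereal t * g u) v = p"
    unfolding prox_def
  proof (rule the_equality)
    show "\<forall>y. ereal t * g p + ereal ((norm (p - v))\<^sup>2 / 2) \<le> ereal t * g y + ereal ((norm (y - v))\<^sup>2 / 2)"
      using obj_fin obj_inf p_dom p_min by (metis ereal_less_eq(1,3))
  next
    fix q assume q: "\<forall>y. ereal t * g q + ereal ((norm (q - v))\<^sup>2 / 2) \<le> ereal t * g y + ereal ((norm (y - v))\<^sup>2 / 2)"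
    have q_dom: "g q < \<infinity>"
      using q[rule_format, of p] obj_fin[OF p_dom] obj_inf by force
    have q_min: "prox_obj t v q \<le> prox_obj t v u" if "g u < \<infinity>" for u
      using q[rule_format, of u] obj_fin[OF q_dom] obj_fin[OF that] by simp
    text \<open>Two minimisers with the same value: the midpoint would do strictly better unless they coincide.\<close>
    have "prox_obj t v p \<le> prox_obj t v ((1/2) *\<^sub>R q + (1/2) *\<^sub>R p)"
      by (rule p_min[OF prox_obj_midpoint(1)[OF q_dom p_dom t]])
    then have "(norm (q - p))\<^sup>2 \<le> 0"
      using prox_obj_midpoint(2)[OF q_dom p_dom t, of v] q_min[OF p_dom] p_min[OF q_dom] by argo
    then show "q = p" by simp
  qed
  then show "g (prox (\<lambda>u. ereal t * g u) v) < \<infinity>"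
    and "g u < \<infinity> \<Longrightarrow> prox_obj t v (prox (\<lambda>u. ereal t * g u) v) \<le> prox_obj t v u"
    using p_dom p_min by auto
qed

text \<open>Compare the prox point with points on the segment towards y, using strong convexity.\<close>
lemma prox_three_point:
  assumes t: "t > 0" and y: "g y < \<infinity>"
  shows "prox_obj t v (prox (\<lambda>u. ereal t * g u) v) + (norm (y - prox (\<lambda>u. ereal t * g u) v))\<^sup>2 / 2
         \<le> prox_obj t v y"
proof (rule ccontr)
  define p where "p = prox (\<lambda>u. ereal t * g u) v"
  note p_dom = prox_minimizes(1)[OF t, of v, folded p_def]
  note p_min = prox_minimizes(2)[OF t, of _ v, folded p_def]
  define N where "N = (norm (y - p))\<^sup>2"
  define D where "D = prox_obj t v p + N / 2 - prox_obj t v y"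
  assume "\<not> ?thesis"
  then have D: "D > 0" by (simp add: D_def p_def N_def)
  have N: "N \<ge> 0" by (simp add: N_def)
  define s where "s = min (1/2) (D / (N + 1))"
  have s: "0 < s" "s \<le> 1" using D N by (auto simp: s_def)
  have "prox_obj t v p \<le> prox_obj t v ((1 - s) *\<^sub>R p + s *\<^sub>R y)"
    using p_min prox_obj_convex_combination(1)[OF p_dom y] s t by auto
  also have "\<dots> \<le> (1 - s) * prox_obj t v p + s * prox_obj t v y - s * (1 - s) / 2 * N"
    using prox_obj_convex_combination(2)[OF p_dom y, of s t v] s t by (simp add: N_def norm_minus_commute)
  finally have "s * (prox_obj t v p - (prox_obj t v y - N / 2 + s * N / 2)) \<le> 0"
    by (simp add: algebra_simps diff_divide_distrib)
  then have "prox_obj t v p \<le> prox_obj t v y - N / 2 + s * N / 2"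
    using s by (simp add: mult_le_0_iff)
  moreover have "s * N \<le> D / (N + 1) * N"
    using N by (intro mult_right_mono) (auto simp: s_def)
  moreover have "D / (N + 1) * N < D"
    using D N by (simp add: field_simps)
  ultimately show False using D unfolding D_def by linarith
qed

lemma prox_nonexpansive:
  assumes t: "t > 0"
  shows "norm (prox (\<lambda>u. ereal t * g u) v1 - prox (\<lambda>u. ereal t * g u) v2) \<le> norm (v1 - v2)"
proof -
  define p where "p = prox (\<lambda>u. ereal t * g u) v1"
  define q where "q = prox (\<lambda>u. ereal t * g u) v2"
  have "g p < \<infinity>" "g q < \<infinity>" using prox_minimizes(1)[OF t] by (auto simp: p_def q_def)
  then have "prox_obj t v1 p + (norm (q - p))\<^sup>2 / 2 \<le> prox_obj t v1 q"
    and "prox_obj t v2 q + (norm (p - q))\<^sup>2 / 2 \<le> prox_obj t v2 p"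
    unfolding p_def q_def by (auto intro: prox_three_point[OF t])
  moreover have "(norm (q - v1))\<^sup>2 + (norm (p - v2))\<^sup>2 - (norm (p - v1))\<^sup>2 - (norm (q - v2))\<^sup>2
      = 2 * inner (p - q) (v1 - v2)"
    unfolding power2_norm_eq_inner
    by (simp add: inner_diff_left inner_diff_right inner_commute algebra_simps)
  ultimately have "(norm (p - q))\<^sup>2 \<le> inner (p - q) (v1 - v2)"
    unfolding prox_obj_def by (simp add: norm_minus_commute[of q p] field_simps)
  also have "\<dots> \<le> norm (p - q) * norm (v1 - v2)" by (rule norm_cauchy_schwarz)
  finally show ?thesis
    unfolding p_def[symmetric] q_def[symmetric]
    by (cases "p = q") (auto simp: power2_eq_square)
qed

end

locale dc_composite = proper_closed_convex g for g :: "'a::euclidean_space \<Rightarrow> ereal" +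
  fixes f1 f2 :: "'a \<Rightarrow> real" and df1 df2 :: "'a \<Rightarrow> 'a" and L l :: real
  assumes f1_convex: "convex_on UNIV f1" and f2_convex: "convex_on UNIV f2"
    and df1: "\<And>z. GDERIV f1 z :> df1 z" and df2: "\<And>z. GDERIV f2 z :> df2 z"
    and L_pos: "L > 0" and l_nonneg: "l \<ge> 0"
    and df1_lipschitz: "L-lipschitz_on UNIV df1" and df2_lipschitz: "l-lipschitz_on UNIV df2"
begin

definition f :: "'a \<Rightarrow> real" where "f z = f1 z - f2 z"
definition df :: "'a \<Rightarrow> 'a" where "df z = df1 z - df2 z"
definition F :: "'a \<Rightarrow> ereal" where "F z = ereal (f z) + g z"
definition Fval :: "'a \<Rightarrow> real" where "Fval z = f z + gval z"
definition T :: "'a \<Rightarrow> 'a" where "T z = prox (\<lambda>u. ereal (1 / L) * g u) (z - (1 / L) *\<^sub>R df z)"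
definition stationary :: "'a set" where "stationary = {z. \<exists>v\<in>subdiff g z. df z + v = 0}"

lemma F_eq_Fval: "g z < \<infinity> \<Longrightarrow> F z = ereal (Fval z)"
  using g_eq_gval[of z] by (simp add: F_def Fval_def)

lemma f_upper_bound: "f w \<le> f y + inner (df y) (w - y) + L / 2 * (norm (w - y))\<^sup>2"
  using lipschitz_gradient_upper_bound[OF df1 df1_lipschitz, of w y]
    convex_on_gradient_inequality[OF f2_convex df2, of y w]
  by (simp add: f_def df_def inner_diff_left)

lemma f_lower_bound: "f y + inner (df y) (w - y) - l / 2 * (norm (w - y))\<^sup>2 \<le> f w"
  using lipschitz_gradient_upper_bound[OF df2 df2_lipschitz, of w y]
    convex_on_gradient_inequality[OF f1_convex df1, of y w]
  by (simp add: f_def df_def inner_diff_left)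

lemma df_lipschitz: "norm (df a - df b) \<le> (L + l) * norm (a - b)"
proof -
  have "norm (df a - df b) \<le> norm (df1 a - df1 b) + norm (df2 a - df2 b)"
    using norm_triangle_ineq4[of "df1 a - df1 b" "df2 a - df2 b"] by (simp add: df_def algebra_simps)
  also have "\<dots> \<le> L * norm (a - b) + l * norm (a - b)"
    using lipschitz_on_normD[OF df1_lipschitz] lipschitz_on_normD[OF df2_lipschitz] by (simp add: add_mono)
  finally show ?thesis by (simp add: algebra_simps)
qed

lemma T_in_dom: "g (T y) < \<infinity>"
  unfolding T_def using prox_minimizes(1) L_pos by simp

lemma T_lipschitz: "norm (T a - T b) \<le> (2 + l / L) * norm (a - b)"
proof -
  have "norm (T a - T b) \<le> norm ((a - b) - (1 / L) *\<^sub>R (df a - df b))"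
    using prox_nonexpansive[of "1 / L" "a - (1 / L) *\<^sub>R df a" "b - (1 / L) *\<^sub>R df b"] L_pos
    by (simp add: T_def algebra_simps)
  also have "\<dots> \<le> norm (a - b) + (1 / L) * norm (df a - df b)"
    using norm_triangle_ineq4[of "a - b" "(1 / L) *\<^sub>R (df a - df b)"] L_pos by simp
  also have "\<dots> \<le> norm (a - b) + (1 / L) * ((L + l) * norm (a - b))"
    using df_lipschitz[of a b] L_pos by (simp add: divide_right_mono)
  also have "\<dots> = (2 + l / L) * norm (a - b)"
    using L_pos by (simp add: field_simps)
  finally show ?thesis .
qed

text \<open>The three-point property of the prox, combined with the upper bound for f at T y and the
  lower bound for f at w.\<close>
lemma T_step_inequality:
  assumes w: "g w < \<infinity>"
  shows "Fval (T y) + L / 2 * (norm (w - T y))\<^sup>2 \<le> Fval w + (L + l) / 2 * (norm (w - y))\<^sup>2"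
proof -
  define p where "p = T y"
  have L_inv: "1 / L > 0" using L_pos by simp
  have "prox_obj (1 / L) (y - (1 / L) *\<^sub>R df y) p + (norm (w - p))\<^sup>2 / 2
      \<le> prox_obj (1 / L) (y - (1 / L) *\<^sub>R df y) w"
    unfolding p_def T_def by (rule prox_three_point[OF L_inv w])
  then have "(1 / L) * gval p + ((norm (p - y))\<^sup>2 + 2 * (1 / L) * inner (df y) (p - y)) / 2 + (norm (w - p))\<^sup>2 / 2
      \<le> (1 / L) * gval w + ((norm (w - y))\<^sup>2 + 2 * (1 / L) * inner (df y) (w - y)) / 2"
    unfolding prox_obj_def norm_minus_shift_squared by (simp add: field_simps)
  moreover have "(1 / L) * (gval p + L / 2 * (norm (p - y))\<^sup>2 + inner (df y) (p - y) + L / 2 * (norm (w - p))\<^sup>2)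
      = (1 / L) * gval p + ((norm (p - y))\<^sup>2 + 2 * (1 / L) * inner (df y) (p - y)) / 2 + (norm (w - p))\<^sup>2 / 2"
    and "(1 / L) * (gval w + L / 2 * (norm (w - y))\<^sup>2 + inner (df y) (w - y))
      = (1 / L) * gval w + ((norm (w - y))\<^sup>2 + 2 * (1 / L) * inner (df y) (w - y)) / 2"
    using L_pos by (simp_all add: field_simps)
  ultimately have "gval p + L / 2 * (norm (p - y))\<^sup>2 + inner (df y) (p - y) + L / 2 * (norm (w - p))\<^sup>2
      \<le> gval w + L / 2 * (norm (w - y))\<^sup>2 + inner (df y) (w - y)"
    using L_inv by (metis mult_left_le_imp_le)
  then show ?thesis
    using f_upper_bound[of p y] f_lower_bound[of y w] unfolding p_def[symmetric] Fval_def
    by (simp add: algebra_simps add_divide_distrib)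
qed

lemma stationaryD:
  assumes "z \<in> stationary"
  shows "g z < \<infinity>" and "g u < \<infinity> \<Longrightarrow> gval z \<le> gval u + inner (df z) (u - z)"
proof -
  obtain v where v: "v \<in> subdiff g z" "df z + v = 0"
    using assms by (auto simp: stationary_def)
  then have "- df z \<in> subdiff g z" by (simp add: add_eq_0_iff)
  then have z_dom: "g z < \<infinity>" and "g z + ereal (inner (- df z) (u - z)) \<le> g u"
    by (auto simp: subdiff_def)
  then show "g z < \<infinity>" and "g u < \<infinity> \<Longrightarrow> gval z \<le> gval u + inner (df z) (u - z)"
    using g_eq_gval[of z] g_eq_gval[of u] by auto

qed

lemma stationaryI:
  assumes z_dom: "g z < \<infinity>" and ineq: "\<And>u. g u < \<infinity> \<Longrightarrow> gval z \<le> gval u + inner (df z) (u - z)"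
  shows "z \<in> stationary"
proof -
  have "g z + ereal (inner (- df z) (u - z)) \<le> g u" for u
    using ineq[of u] g_eq_gval[OF z_dom] g_eq_gval[of u] g_not_finite_eq[of u]
    by (cases "g u < \<infinity>") auto
  then have "- df z \<in> subdiff g z"
    using z_dom by (simp add: subdiff_def)
  then show ?thesis by (force simp: stationary_def)
qed

lemma Fval_stationary_lower_bound:
  assumes z: "z \<in> stationary" and u: "g u < \<infinity>"
  shows "Fval z - l / 2 * (norm (u - z))\<^sup>2 \<le> Fval u"
  using stationaryD(2)[OF z u] f_lower_bound[of z u] by (simp add: Fval_def)

lemma closed_stationary: "closed stationary"
  unfolding closed_sequential_limits
proof (intro allI impI, elim conjE)
  fix z and p assume z: "\<forall>n. z n \<in> stationary" and lim: "z \<longlonglongrightarrow> p"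
  have "(L + l)-lipschitz_on UNIV df"
    using df_lipschitz L_pos l_nonneg by (intro lipschitz_onI) (auto simp: dist_norm)
  then have df_lim: "(\<lambda>n. df (z n)) \<longlonglongrightarrow> df p"
    by (intro continuous_on_tendsto_compose[OF lipschitz_on_continuous_on lim]) auto
  have ineq: "g p \<le> ereal (gval u + inner (df p) (u - p))" if u: "g u < \<infinity>" for u
  proof (rule g_le_limit[OF lim])
    show "(\<lambda>n. gval u + inner (df (z n)) (u - z n)) \<longlonglongrightarrow> gval u + inner (df p) (u - p)"
      by (intro tendsto_intros df_lim lim)
    show "g (z n) \<le> ereal (gval u + inner (df (z n)) (u - z n))" for n
      using stationaryD[OF z[rule_format, of n]] u g_eq_gval[of "z n"] by simp
  qed
  obtain u0 where "g u0 < \<infinity>" using dom_nonempty by blast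
  then have p_dom: "g p < \<infinity>" using ineq le_less_trans by fastforce
  show "p \<in> stationary"
    by (rule stationaryI[OF p_dom]) (use ineq g_eq_gval[OF p_dom] in simp)
qed

text \<open>If the bracket were negative, a step of length s from z towards u would lower Fval by order s,
  while the quadratic upper bound for f only costs order s squared.\<close>
lemma minimizer_variational_inequality:
  assumes z_dom: "g z < \<infinity>" and z_min: "\<And>w. g w < \<infinity> \<Longrightarrow> Fval z \<le> Fval w"
    and u: "g u < \<infinity>"
  shows "0 \<le> inner (df z) (u - z) + gval u - gval z"
proof (rule ccontr)
  define Q where "Q = inner (df z) (u - z) + gval u - gval z"
  define N where "N = (norm (u - z))\<^sup>2"
  assume "\<not> 0 \<le> inner (df z) (u - z) + gval u - gval z"
  then have Q: "Q < 0" by (simp add: Q_def)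
  have LN: "L * N \<ge> 0" using L_pos by (simp add: N_def)
  define s where "s = min 1 (- Q / (L * N + 1))"
  have s: "0 < s" "s \<le> 1" using Q LN divide_neg_pos[of Q "L * N + 1"] by (auto simp: s_def)
  define w where "w = (1 - s) *\<^sub>R z + s *\<^sub>R u"
  have g_w: "g w \<le> ereal ((1 - s) * gval z + s * gval u)"
    unfolding w_def using g_convex_combination[OF z_dom u] s by simp
  then have w_dom: "g w < \<infinity>" by (rule le_less_trans) simp
  have w_z: "w - z = s *\<^sub>R (u - z)" by (simp add: w_def algebra_simps)
  have norm_w_z: "(norm (w - z))\<^sup>2 = s\<^sup>2 * N"
    using s by (simp add: w_z N_def power_mult_distrib)
  have "Fval z \<le> Fval w" by (rule z_min[OF w_dom])
  also have "\<dots> \<le> f z + inner (df z) (w - z) + L / 2 * (norm (w - z))\<^sup>2 + ((1 - s) * gval z + s * gval u)"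
    using f_upper_bound[of w z] g_w g_eq_gval[OF w_dom] by (simp add: Fval_def)
  also have "\<dots> = Fval z + s * (Q + L / 2 * s * N)"
    unfolding norm_w_z by (simp add: w_z Fval_def Q_def algebra_simps power2_eq_square)
  finally have "0 \<le> Q + L / 2 * s * N" using s by (simp add: zero_le_mult_iff)
  moreover have "L / 2 * s * N \<le> L / 2 * (- Q / (L * N + 1)) * N"
    using L_pos by (intro mult_right_mono mult_left_mono) (auto simp: s_def N_def)
  moreover have "L / 2 * (- Q / (L * N + 1)) * N < - Q"
    using Q LN mult_nonneg_nonpos[OF LN, of Q] by (simp add: field_simps)
  ultimately show False by linarith
qed

lemma minimizer_stationary:
  assumes z_min: "\<And>w. F z \<le> F w"
  shows "z \<in> stationary"
proof -
  obtain u0 where u0: "g u0 < \<infinity>" using dom_nonempty by blast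
  have z_dom: "g z < \<infinity>"
    using z_min[of u0] F_eq_Fval[OF u0] g_not_finite_eq[of z] by (cases "g z < \<infinity>") (auto simp: F_def)
  have "Fval z \<le> Fval w" if "g w < \<infinity>" for w
    using z_min[of w] F_eq_Fval[OF z_dom] F_eq_Fval[OF that] by simp
  then show ?thesis
    using minimizer_variational_inequality[OF z_dom] by (intro stationaryI[OF z_dom]) force
qed

end

locale prox_grad_extrapolation = dc_composite g f1 f2 df1 df2 L l
  for g :: "'a::euclidean_space \<Rightarrow> ereal" and f1 f2 df1 df2 L l +
  fixes \<beta> :: "nat \<Rightarrow> real" and x :: "nat \<Rightarrow> 'a" and \<alpha> :: real
  assumes x0_dom: "g (x 0) < \<infinity>"
    and beta_range: "\<And>k. 0 \<le> \<beta> k \<and> \<beta> k \<le> sqrt (L / (L + l))"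
    and iter: "\<And>k. x (Suc k) = T (x k + \<beta> k *\<^sub>R (x k - (if k = 0 then x 0 else x (k - 1))))"
    and alpha_range: "(L + l) / 2 * (SUP k. \<beta> k)\<^sup>2 < \<alpha>" "\<alpha> < L / 2"
    and has_minimizer: "\<exists>z. \<forall>w. F z \<le> F w"
begin

definition x_prev :: "nat \<Rightarrow> 'a" where "x_prev k = (if k = 0 then x 0 else x (k - 1))"
definition step :: "nat \<Rightarrow> real" where "step k = norm (x k - x_prev k)"
definition y :: "nat \<Rightarrow> 'a" where "y k = x k + \<beta> k *\<^sub>R (x k - x_prev k)"
definition beta_sup :: real where "beta_sup = (SUP k. \<beta> k)"
definition merit :: "nat \<Rightarrow> real" where "merit k = Fval (x k) + \<alpha> * (step k)\<^sup>2"

definition \<mu> :: real where "\<mu> = \<alpha> - (L + l) / 2 * beta_sup\<^sup>2"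
definition \<nu> :: real where "\<nu> = L / 2 - \<alpha>"

lemma x_Suc: "x (Suc k) = T (y k)"
  using iter[of k] by (simp add: y_def x_prev_def)

lemma step_Suc: "step (Suc k) = norm (x (Suc k) - x k)"
  by (simp add: step_def x_prev_def)

lemma step_nonneg: "0 \<le> step k"
  by (simp add: step_def)

lemma beta_le_sup: "\<beta> k \<le> beta_sup"
  unfolding beta_sup_def using beta_range by (intro cSUP_upper) (auto simp: bdd_above_def)

lemma beta_sup_nonneg: "0 \<le> beta_sup"
  using beta_range[of 0] beta_le_sup[of 0] by linarith

lemma mu_pos: "0 < \<mu>" and nu_pos: "0 < \<nu>"
  using alpha_range by (simp_all add: \<mu>_def \<nu>_def beta_sup_def)

lemma alpha_pos: "0 < \<alpha>"
proof -
  have "0 \<le> (L + l) / 2 * beta_sup\<^sup>2" using L_pos l_nonneg by simp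
  then show ?thesis using mu_pos by (simp add: \<mu>_def)
qed

lemma x_in_dom: "g (x k) < \<infinity>"
  using x0_dom T_in_dom x_Suc by (cases k) auto

lemma norm_x_minus_y: "norm (x k - y k) = \<beta> k * step k"
  using beta_range[of k] by (simp add: y_def step_def)

lemma merit_decrease: "merit (Suc k) + \<mu> * (step k)\<^sup>2 + \<nu> * (step (Suc k))\<^sup>2 \<le> merit k"
proof -
  have "Fval (x (Suc k)) + L / 2 * (step (Suc k))\<^sup>2 \<le> Fval (x k) + (L + l) / 2 * (\<beta> k * step k)\<^sup>2"
    using T_step_inequality[OF x_in_dom[of k], of "y k"]
    unfolding x_Suc[symmetric] norm_x_minus_y step_Suc by (simp add: norm_minus_commute)
  moreover have "(\<beta> k * step k)\<^sup>2 \<le> (beta_sup * step k)\<^sup>2"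
    using beta_range[of k] beta_le_sup[of k] step_nonneg[of k] by (intro power_mono mult_right_mono) auto
  then have "(L + l) / 2 * (\<beta> k * step k)\<^sup>2 \<le> (L + l) / 2 * (beta_sup * step k)\<^sup>2"
    using L_pos l_nonneg by (intro mult_left_mono) auto
  moreover have "merit (Suc k) + \<mu> * (step k)\<^sup>2 + \<nu> * (step (Suc k))\<^sup>2
      = Fval (x (Suc k)) + L / 2 * (step (Suc k))\<^sup>2 + \<alpha> * (step k)\<^sup>2 - (L + l) / 2 * (beta_sup * step k)\<^sup>2"
    by (simp add: merit_def \<mu>_def \<nu>_def algebra_simps power_mult_distrib)
  ultimately show ?thesis
    by (simp add: merit_def)
qed

lemma decseq_merit: "decseq merit"
proof (rule decseq_SucI)
  fix k
  have "0 \<le> \<mu> * (step k)\<^sup>2" "0 \<le> \<nu> * (step (Suc k))\<^sup>2" using mu_pos nu_pos by simp_all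
  then show "merit (Suc k) \<le> merit k" using merit_decrease[of k] by linarith
qed

lemma Fval_le_merit: "Fval (x k) \<le> merit k"
  using alpha_pos by (simp add: merit_def)

lemma convergent_merit: "convergent merit"
proof -
  obtain z where z_min: "\<And>w. F z \<le> F w" using has_minimizer by blast
  have z_dom: "g z < \<infinity>" using stationaryD(1)[OF minimizer_stationary[OF z_min]] .
  have "\<forall>k. Fval z \<le> merit k"
    using z_min F_eq_Fval[OF z_dom] F_eq_Fval[OF x_in_dom] Fval_le_merit by (metis ereal_less_eq(3) order_trans)
  then show ?thesis
    using decseq_convergent[OF decseq_merit] unfolding convergent_def by metis
qed

lemma steps_squared_le_merit_decrease:
  "(step k)\<^sup>2 + (step (Suc k))\<^sup>2 \<le> (merit k - merit (Suc k)) / min \<mu> \<nu>"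
proof -
  have "min \<mu> \<nu> * ((step k)\<^sup>2 + (step (Suc k))\<^sup>2) \<le> \<mu> * (step k)\<^sup>2 + \<nu> * (step (Suc k))\<^sup>2"
    by (simp add: distrib_left add_mono mult_right_mono)
  also have "\<dots> \<le> merit k - merit (Suc k)"
    using merit_decrease[of k] by simp
  finally show ?thesis
    using mu_pos nu_pos by (simp add: field_simps)
qed

lemma step_tendsto_zero: "step \<longlonglongrightarrow> 0"
proof -
  obtain \<zeta> where lim: "merit \<longlonglongrightarrow> \<zeta>" using convergent_merit by (auto simp: convergent_def)
  have "(\<lambda>k. (merit k - merit (Suc k)) / min \<mu> \<nu>) \<longlonglongrightarrow> (\<zeta> - \<zeta>) / min \<mu> \<nu>"
    using mu_pos nu_pos by (intro tendsto_intros lim LIMSEQ_Suc[OF lim]) simp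
  then have upper_lim: "(\<lambda>k. (merit k - merit (Suc k)) / min \<mu> \<nu>) \<longlonglongrightarrow> 0" by simp
  have "(step (Suc k))\<^sup>2 \<le> (merit k - merit (Suc k)) / min \<mu> \<nu>" for k
    using steps_squared_le_merit_decrease[of k] zero_le_power2[of "step k"] by linarith
  then have "(\<lambda>k. (step (Suc k))\<^sup>2) \<longlonglongrightarrow> 0"
    by (intro tendsto_sandwich[OF _ _ tendsto_const upper_lim]) simp_all
  then have "(\<lambda>k. sqrt ((step (Suc k))\<^sup>2)) \<longlonglongrightarrow> sqrt 0" by (rule tendsto_real_sqrt)
  then have "(\<lambda>k. step (Suc k)) \<longlonglongrightarrow> 0" using step_nonneg by simp
  then show ?thesis by (rule LIMSEQ_imp_Suc)
qed

lemma residual_bound: "norm (T (x k) - x k) \<le> (2 + l / L) * beta_sup * step k + step (Suc k)"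
proof -
  have "norm (T (x k) - x k) \<le> norm (T (x k) - T (y k)) + norm (x (Suc k) - x k)"
    using norm_triangle_ineq[of "T (x k) - T (y k)" "x (Suc k) - x k"] by (simp add: x_Suc)
  also have "norm (T (x k) - T (y k)) \<le> (2 + l / L) * (\<beta> k * step k)"
    using T_lipschitz[of "x k" "y k"] by (simp add: norm_x_minus_y)
  also have "\<dots> \<le> (2 + l / L) * (beta_sup * step k)"
    using beta_le_sup[of k] step_nonneg[of k] L_pos l_nonneg
    by (intro mult_left_mono mult_right_mono) auto
  finally show ?thesis by (simp add: step_Suc mult.assoc)
qed

lemma residual_tendsto_zero: "(\<lambda>k. (2 + l / L) * beta_sup * step k + step (Suc k)) \<longlonglongrightarrow> 0"
  using tendsto_add[OF tendsto_mult_right_zero[OF step_tendsto_zero] LIMSEQ_Suc[OF step_tendsto_zero]]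
  by simp

lemma Fval_x_Suc_le:
  assumes w: "g w < \<infinity>" and r: "norm (w - x k) \<le> r"
  shows "Fval (x (Suc k)) \<le> Fval w + (L + l) / 2 * (r + beta_sup * step k)\<^sup>2"
proof -
  have "0 \<le> L / 2 * (norm (w - x (Suc k)))\<^sup>2" using L_pos by simp
  then have "Fval (x (Suc k)) \<le> Fval w + (L + l) / 2 * (norm (w - y k))\<^sup>2"
    using T_step_inequality[OF w, of "y k"] unfolding x_Suc[symmetric] by linarith
  also have "norm (w - y k) \<le> r + beta_sup * step k"
    using norm_triangle_ineq[of "w - x k" "x k - y k"] norm_x_minus_y[of k] r
      mult_right_mono[OF beta_le_sup[of k] step_nonneg[of k]] by simp
  then have "(norm (w - y k))\<^sup>2 \<le> (r + beta_sup * step k)\<^sup>2"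
    by (intro power_mono) auto
  then have "(L + l) / 2 * (norm (w - y k))\<^sup>2 \<le> (L + l) / 2 * (r + beta_sup * step k)\<^sup>2"
    using L_pos l_nonneg by (intro mult_left_mono) auto
  finally show ?thesis by simp
qed

lemma merit_Suc_minus_le_steps:
  assumes w: "g w < \<infinity>" and near: "norm (w - x k) + beta_sup * step k \<le> A * step k + B * step (Suc k)"
  shows "merit (Suc k) - Fval w \<le> ((L + l) * (A\<^sup>2 + B\<^sup>2) + \<alpha>) * ((step k)\<^sup>2 + (step (Suc k))\<^sup>2)"
proof -
  define a b where "a = step k" and "b = step (Suc k)"
  have "(norm (w - x k) + beta_sup * a)\<^sup>2 \<le> (A * a + B * b)\<^sup>2"
    using near mult_nonneg_nonneg[OF beta_sup_nonneg step_nonneg[of k]]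
    by (intro power_mono) (auto simp: a_def b_def)
  also have "\<dots> \<le> 2 * ((A\<^sup>2 + B\<^sup>2) * (a\<^sup>2 + b\<^sup>2))"
    using sum_squares_bound[of "A * a" "B * b"] zero_le_power2[of "A * b"] zero_le_power2[of "B * a"]
    by (simp add: power2_eq_square algebra_simps)
  finally have "(L + l) / 2 * (norm (w - x k) + beta_sup * a)\<^sup>2
      \<le> (L + l) / 2 * (2 * ((A\<^sup>2 + B\<^sup>2) * (a\<^sup>2 + b\<^sup>2)))"
    using L_pos l_nonneg by (intro mult_left_mono) auto
  moreover have "Fval (x (Suc k)) \<le> Fval w + (L + l) / 2 * (norm (w - x k) + beta_sup * a)\<^sup>2"
    unfolding a_def by (rule Fval_x_Suc_le[OF w order_refl])
  moreover have "\<alpha> * b\<^sup>2 \<le> \<alpha> * (a\<^sup>2 + b\<^sup>2)"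
    using alpha_pos by simp
  ultimately have "merit (Suc k) - Fval w \<le> (L + l) * ((A\<^sup>2 + B\<^sup>2) * (a\<^sup>2 + b\<^sup>2)) + \<alpha> * (a\<^sup>2 + b\<^sup>2)"
    unfolding merit_def b_def[symmetric] by simp
  then show ?thesis
    by (simp add: a_def b_def algebra_simps)
qed

lemma nearest_stationary:
  obtains p where "\<And>k. p k \<in> stationary" and "\<And>k. dist (x k) (p k) = infdist (x k) stationary"
proof -
  have "stationary \<noteq> {}"
    using has_minimizer minimizer_stationary by blast
  then have "\<forall>k. \<exists>u\<in>stationary. infdist (x k) stationary = dist (x k) u"
    using infdist_attains_inf[OF closed_stationary] by blast
  then show ?thesis using that by metis
qed

end

locale prox_grad_extrapolation_regular = prox_grad_extrapolation +
  assumes error_bound: "\<forall>\<xi>::real. ereal \<xi> \<ge> (INF z. F z) \<longrightarrow>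
      (\<exists>\<epsilon>>0. \<exists>\<tau>>0. \<forall>z. norm (T z - z) < \<epsilon> \<and> F z \<le> ereal \<xi> \<longrightarrow>
          infdist z stationary \<le> \<tau> * norm (T z - z))"
    and separation: "\<exists>\<delta>>0. \<forall>u\<in>stationary. \<forall>v\<in>stationary. F u \<noteq> F v \<longrightarrow> dist u v \<ge> \<delta>"
begin

text \<open>The error bound is applied at the level merit 0, which bounds every F (x k).\<close>
lemma infdist_bound:
  obtains \<tau> K where "\<tau> > 0"
    and "\<And>k. k \<ge> K \<Longrightarrow> infdist (x k) stationary \<le> \<tau> * ((2 + l / L) * beta_sup * step k + step (Suc k))"
proof -
  have F_x: "F (x k) \<le> ereal (merit 0)" for k
    using Fval_le_merit[of k] decseqD[OF decseq_merit, of 0 k] F_eq_Fval[OF x_in_dom] by simp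
  have "(INF z. F z) \<le> ereal (merit 0)"
    using F_x[of 0] by (rule INF_lower2[OF UNIV_I])
  then obtain \<epsilon> \<tau> where \<epsilon>: "\<epsilon> > 0" and \<tau>: "\<tau> > 0"
    and eb: "\<And>z. norm (T z - z) < \<epsilon> \<Longrightarrow> F z \<le> ereal (merit 0) \<Longrightarrow> infdist z stationary \<le> \<tau> * norm (T z - z)"
    using error_bound by blast
  have "\<forall>\<^sub>F k in sequentially. (2 + l / L) * beta_sup * step k + step (Suc k) < \<epsilon>"
    using residual_tendsto_zero \<epsilon> by (rule order_tendstoD)
  then obtain K where K: "\<And>k. k \<ge> K \<Longrightarrow> (2 + l / L) * beta_sup * step k + step (Suc k) < \<epsilon>"
    unfolding eventually_sequentially by blast
  have "infdist (x k) stationary \<le> \<tau> * ((2 + l / L) * beta_sup * step k + step (Suc k))" if "k \<ge> K" for k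
  proof -
    have "infdist (x k) stationary \<le> \<tau> * norm (T (x k) - x k)"
      using eb[OF le_less_trans[OF residual_bound K[OF that]] F_x] .
    also have "\<dots> \<le> \<tau> * ((2 + l / L) * beta_sup * step k + step (Suc k))"
      using residual_bound \<tau> by (intro mult_left_mono) auto
    finally show ?thesis .
  qed
  then show ?thesis using that \<tau> by blast
qed

lemma infdist_tendsto_zero: "(\<lambda>k. infdist (x k) stationary) \<longlonglongrightarrow> 0"
proof -
  obtain \<tau> K where bound: "\<And>k. k \<ge> K \<Longrightarrow>
      infdist (x k) stationary \<le> \<tau> * ((2 + l / L) * beta_sup * step k + step (Suc k))"
    using infdist_bound by blast
  show ?thesis
  proof (rule tendsto_sandwich[OF _ _ tendsto_const])
    show "\<forall>\<^sub>F k in sequentially. 0 \<le> infdist (x k) stationary"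
      by (simp add: infdist_nonneg)
    show "\<forall>\<^sub>F k in sequentially.
        infdist (x k) stationary \<le> \<tau> * ((2 + l / L) * beta_sup * step k + step (Suc k))"
      using bound unfolding eventually_sequentially by blast
    show "(\<lambda>k. \<tau> * ((2 + l / L) * beta_sup * step k + step (Suc k))) \<longlonglongrightarrow> 0"
      using tendsto_mult_right_zero[OF residual_tendsto_zero, of \<tau>] by simp
  qed
qed

text \<open>Consecutive nearest stationary points are eventually closer than the separation
  constant, so they all share one objective value.\<close>
lemma Fval_nearest_eventually_constant:
  assumes p: "\<And>k. p k \<in> stationary" and p_dist: "\<And>k. dist (x k) (p k) = infdist (x k) stationary"
  obtains K where "\<And>k. k \<ge> K \<Longrightarrow> Fval (p k) = Fval (p K)"
proof -
  obtain \<delta> where \<delta>: "\<delta> > 0"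
    and sep: "\<And>u v. u \<in> stationary \<Longrightarrow> v \<in> stationary \<Longrightarrow> F u \<noteq> F v \<Longrightarrow> \<delta> \<le> dist u v"
    using separation by blast
  have "\<forall>\<^sub>F k in sequentially. infdist (x k) stationary < \<delta> / 4"
    and "\<forall>\<^sub>F k in sequentially. step k < \<delta> / 4"
    using \<delta> by (intro order_tendstoD(2)[OF infdist_tendsto_zero] order_tendstoD(2)[OF step_tendsto_zero], simp)+
  then have "\<forall>\<^sub>F k in sequentially. infdist (x k) stationary < \<delta> / 4 \<and> step k < \<delta> / 4"
    by (rule eventually_conj)
  then obtain K where K: "\<And>k. k \<ge> K \<Longrightarrow> infdist (x k) stationary < \<delta> / 4 \<and> step k < \<delta> / 4"
    unfolding eventually_sequentially by blast
  have "Fval (p k) = Fval (p K)" if "k \<ge> K" for k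
    using that
  proof (induction k rule: dec_induct)
    case (step k)
    have "dist (p k) (p (Suc k)) \<le> dist (p k) (x k) + dist (x k) (x (Suc k)) + dist (x (Suc k)) (p (Suc k))"
      by (metis dist_triangle add_right_mono order_trans)
    also have "\<dots> < \<delta>"
      using K[of k] K[of "Suc k"] step.hyps p_dist[of k] p_dist[of "Suc k"] \<delta>
      by (simp add: dist_commute dist_norm step_Suc norm_minus_commute)
    finally have "F (p k) = F (p (Suc k))"
      using sep[OF p p] by fastforce
    then show ?case
      using step.IH F_eq_Fval[OF stationaryD(1)[OF p]] by simp
  qed simp
  then show ?thesis using that by blast
qed

lemma merit_tendsto_Fval_nearest:
  assumes p: "\<And>k. p k \<in> stationary" and p_dist: "\<And>k. dist (x k) (p k) = infdist (x k) stationary"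
    and const: "\<And>k. k \<ge> K \<Longrightarrow> Fval (p k) = Fval (p K)"
  shows "merit \<longlonglongrightarrow> Fval (p K)"
proof -
  define d where "d k = infdist (x k) stationary" for k
  have d_lim: "d \<longlonglongrightarrow> 0" using infdist_tendsto_zero by (simp add: d_def[abs_def])
  have x_p: "norm (x k - p k) = d k" and p_x: "norm (p k - x k) = d k" for k
    using p_dist[of k] by (simp_all add: d_def dist_norm norm_minus_commute)
  have "(\<lambda>k. Fval (x (Suc k))) \<longlonglongrightarrow> Fval (p K)"
  proof (rule tendsto_sandwich)
    have "Fval (p K) - l / 2 * (d (Suc k))\<^sup>2 \<le> Fval (x (Suc k))" if "k \<ge> K" for k
      using Fval_stationary_lower_bound[OF p x_in_dom, of "Suc k" "Suc k"]
      unfolding x_p const[of "Suc k", OF le_SucI[OF that]] .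
    then show "\<forall>\<^sub>F k in sequentially. Fval (p K) - l / 2 * (d (Suc k))\<^sup>2 \<le> Fval (x (Suc k))"
      unfolding eventually_sequentially by blast
    have "Fval (x (Suc k)) \<le> Fval (p K) + (L + l) / 2 * (d k + beta_sup * step k)\<^sup>2" if "k \<ge> K" for k
      using Fval_x_Suc_le[OF stationaryD(1)[OF p[of k]] eq_refl[OF p_x[of k]]] unfolding const[OF that] .
    then show "\<forall>\<^sub>F k in sequentially. Fval (x (Suc k)) \<le> Fval (p K) + (L + l) / 2 * (d k + beta_sup * step k)\<^sup>2"
      unfolding eventually_sequentially by blast
    have "(\<lambda>k. Fval (p K) - l / 2 * (d (Suc k))\<^sup>2) \<longlonglongrightarrow> Fval (p K) - l / 2 * 0\<^sup>2"
      by (intro tendsto_intros LIMSEQ_Suc[OF d_lim])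
    then show "(\<lambda>k. Fval (p K) - l / 2 * (d (Suc k))\<^sup>2) \<longlonglongrightarrow> Fval (p K)" by simp
    have "(\<lambda>k. Fval (p K) + (L + l) / 2 * (d k + beta_sup * step k)\<^sup>2)
        \<longlonglongrightarrow> Fval (p K) + (L + l) / 2 * (0 + beta_sup * 0)\<^sup>2"
      by (intro tendsto_intros d_lim step_tendsto_zero)
    then show "(\<lambda>k. Fval (p K) + (L + l) / 2 * (d k + beta_sup * step k)\<^sup>2) \<longlonglongrightarrow> Fval (p K)" by simp
  qed
  then have "(\<lambda>k. Fval (x (Suc k)) + \<alpha> * (step (Suc k))\<^sup>2) \<longlonglongrightarrow> Fval (p K) + \<alpha> * 0\<^sup>2"
    by (intro tendsto_intros LIMSEQ_Suc[OF step_tendsto_zero])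
  then have "(\<lambda>k. merit (Suc k)) \<longlonglongrightarrow> Fval (p K)" by (simp add: merit_def)
  then show ?thesis by (rule LIMSEQ_imp_Suc)
qed

lemma merit_Q_linear: "Q_linear_convergent merit"
proof -
  obtain p where p: "\<And>k. p k \<in> stationary" and p_dist: "\<And>k. dist (x k) (p k) = infdist (x k) stationary"
    using nearest_stationary by blast
  obtain K0 where const: "\<And>k. k \<ge> K0 \<Longrightarrow> Fval (p k) = Fval (p K0)"
    using Fval_nearest_eventually_constant[OF p p_dist] by blast
  have lim: "merit \<longlonglongrightarrow> Fval (p K0)"
    by (rule merit_tendsto_Fval_nearest[OF p p_dist const])
  obtain \<tau> K1 where \<tau>: "\<tau> > 0" and bound: "\<And>k. k \<ge> K1 \<Longrightarrow>
      infdist (x k) stationary \<le> \<tau> * ((2 + l / L) * beta_sup * step k + step (Suc k))"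
    using infdist_bound by blast
  define A where "A = \<tau> * (2 + l / L) * beta_sup + beta_sup"
  define C where "C = ((L + l) * (A\<^sup>2 + \<tau>\<^sup>2) + \<alpha>) / min \<mu> \<nu>"
  have C: "C > 0"
    using L_pos l_nonneg alpha_pos mu_pos nu_pos by (simp add: C_def add_nonneg_pos)
  have gap: "merit (Suc k) - Fval (p K0) \<le> C * (merit k - merit (Suc k))" if k: "k \<ge> max K0 K1" for k
  proof -
    have "norm (p k - x k) + beta_sup * step k \<le> A * step k + \<tau> * step (Suc k)"
      using bound[of k] p_dist[of k] k
      by (simp add: A_def dist_norm norm_minus_commute algebra_simps)
    then have "merit (Suc k) - Fval (p k)
        \<le> ((L + l) * (A\<^sup>2 + \<tau>\<^sup>2) + \<alpha>) * ((step k)\<^sup>2 + (step (Suc k))\<^sup>2)"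
      by (rule merit_Suc_minus_le_steps[OF stationaryD(1)[OF p]])
    also have "\<dots> \<le> ((L + l) * (A\<^sup>2 + \<tau>\<^sup>2) + \<alpha>) * ((merit k - merit (Suc k)) / min \<mu> \<nu>)"
      using steps_squared_le_merit_decrease[of k] L_pos l_nonneg alpha_pos
      by (intro mult_left_mono) auto
    also have "\<dots> = C * (merit k - merit (Suc k))"
      by (simp add: C_def)
    finally show ?thesis using const[of k] k by simp
  qed
  have "Q_linear_to merit (Fval (p K0))"
    using C decseq_ge[OF decseq_merit lim] gap by (intro Q_linear_toI[of C "max K0 K1"])
  then show ?thesis unfolding Q_linear_convergent_def by blast
qed

end

theorem lemma3p6:
  fixes g :: "'a::euclidean_space \<Rightarrow> ereal"
    and f1 f2 :: "'a \<Rightarrow> real"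
    and df1 df2 :: "'a \<Rightarrow> 'a"
    and L l :: real
    and \<beta> :: "nat \<Rightarrow> real"
    and x :: "nat \<Rightarrow> 'a"
    and \<alpha> :: real
  defines "F \<equiv> \<lambda>z. ereal (f1 z - f2 z) + g z"
    and "Xs \<equiv> {z. \<exists>v\<in>subdiff g z. (df1 z - df2 z) + v = 0}"
    and "T \<equiv> \<lambda>z. prox (\<lambda>u. ereal (1 / L) * g u) (z - (1 / L) *\<^sub>R (df1 z - df2 z))"

    and "H \<equiv> \<lambda>k. f1 (x k) - f2 (x k) + real_of_ereal (g (x k))
                 + \<alpha> * (norm (x k - (if k = 0 then x 0 else x (k - 1))))\<^sup>2"
  assumes g_proper: "proper_fun g" and g_closed: "closed_fun g" and g_convex: "convex_fun g"
    and f1_convex: "convex_on UNIV f1" and f2_convex: "convex_on UNIV f2"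
    and df1: "\<And>z. GDERIV f1 z :> df1 z" and df2: "\<And>z. GDERIV f2 z :> df2 z"
    and L_pos: "L > 0" and l_nonneg: "l \<ge> 0" and L_ge_l: "L \<ge> l"
    and df1_lip: "L-lipschitz_on UNIV df1" and df2_lip: "l-lipschitz_on UNIV df2"
    and inf_finite: "(INF z. F z) > -\<infinity>"
    and inf_attained: "\<exists>z. \<forall>w. F z \<le> F w"
    and error_bound: "\<forall>\<xi>::real. ereal \<xi> \<ge> (INF z. F z) \<longrightarrow>
        (\<exists>\<epsilon>>0. \<exists>\<tau>>0. \<forall>z. norm (T z - z) < \<epsilon> \<and> F z \<le> ereal \<xi> \<longrightarrow>
            infdist z Xs \<le> \<tau> * norm (T z - z))"
    and separation: "\<exists>\<delta>>0. \<forall>u\<in>Xs. \<forall>v\<in>Xs. F u \<noteq> F v \<longrightarrow> dist u v \<ge> \<delta>"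
    and x0_dom: "x 0 \<in> eff_dom g"
    and beta_range: "\<And>k. 0 \<le> \<beta> k \<and> \<beta> k \<le> sqrt (L / (L + l))"
    and beta_bar: "(SUP k. \<beta> k) < sqrt (L / (L + l))"
    and iter: "\<And>k. x (Suc k) = T (x k + \<beta> k *\<^sub>R (x k - (if k = 0 then x 0 else x (k - 1))))"
    and alpha_range: "(L + l) / 2 * (SUP k. \<beta> k)\<^sup>2 < \<alpha>" "\<alpha> < L / 2"
  shows "(\<lambda>k. infdist (x k) Xs) \<longlonglongrightarrow> 0 \<and> Q_linear_convergent H"
proof -
  interpret DC: dc_composite g f1 f2 df1 df2 L l
    by unfold_locales (fact g_proper g_closed g_convex f1_convex f2_convex df1 df2 L_pos l_nonneg
        df1_lip df2_lip)+
  have F_eq: "F = DC.F" and Xs_eq: "Xs = DC.stationary" and T_eq: "T = DC.T"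
    unfolding F_def Xs_def T_def DC.F_def DC.f_def DC.stationary_def DC.T_def DC.df_def by auto
  interpret PG: prox_grad_extrapolation_regular g f1 f2 df1 df2 L l \<beta> x \<alpha>
    by unfold_locales
      (use x0_dom beta_range iter alpha_range inf_attained error_bound separation
        in \<open>simp_all add: eff_dom_def F_eq Xs_eq T_eq\<close>)
  have "H = PG.merit"
    by (auto simp: H_def PG.merit_def DC.Fval_def DC.f_def DC.gval_def PG.step_def PG.x_prev_def)
  then show ?thesis
    using PG.infdist_tendsto_zero PG.merit_Q_linear by (simp add: Xs_eq)
qed

end
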